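(* Let $X$ and $Y$ be rearrangement invariant spaces on $\mathbb{R}$ and let $c_1,c_2,c_3$ be constants such that: (i) if $f$ has support in $[0,1]$, then $\|f\|_X\le c_1\|f\|_Y$; (ii) if $f$ is constant on each interval $[n,n+1)$, $n\in\mathbb{Z}$, then $\|f\|_Y\le c_1\|f\|_X$; (iii) $\|D_{1/4}f\|_X\le c_2\|f\|_X$ and $\|D_{1/4}f\|_Y\le c_2\|f\|_Y$ for all $f$; (iv) the quasi-triangle inequality constants of $X$ and $Y$ are less than $c_3$. Then for every measurable $f$, $$\|f\|_{X+Y}\le\|f\|_{H(X,Y)}\le 2c_1c_2c_3\|f\|_{X+Y}.$$
   Context: For measurable $f$ on $\mathbb{R}$, $f^*(s)=\sup\{t:\text{measure}\{|f|>t\}>s\}$ ($s>0$). A rearrangement invariant (r.i.) space $X$ on $\mathbb{R}$ is a set of measurable functions (modulo a.e. equality) with a complete quasi-norm $\|\cdot\|_X$ such that: (1) if $g^*\le f^*$ and $f\in X$ then $g\in X$ and $\|g\|_X\le\|f\|_X$; (2) every simple function with support of finite measure is in $X$; (3) either $f_n\searrow 0$ implies $\|f_n\|_X\searrow0$, or $0\le f_n\nearrow f$ with $\sup_n\|f_n\|_X<\infty$ implies $f\in X$ and $\|f\|_X=\sup_n\|f_n\|_X$. Norms of functions not in the space are $+\infty$. The quasi-triangle inequality constant of $X$ is a $K$ with $\|f+g\|_X\le K(\|f\|_X+\|g\|_X)$. $D_af(t)=f(at)$. $\|f\|_{X+Y}=\inf\{\|f'\|_X+\|f''\|_Y: f'+f''=f\}$,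 and $\|f\|_{H(X,Y)}=\|f^*\mathbf{1}_{[0,1]}\|_X+\|f^*\mathbf{1}_{[1,\infty)}\|_Y$, where $f^*\mathbf{1}_{[0,1]}$ denotes the function on $\mathbb{R}$ equal to $f^*$ on $(0,1]$ and $0$ elsewhere, and similarly for $[1,\infty)$. *)

theory Defs
  imports "HOL-Analysis.Analysis"
begin

text \<open>Functions on the real line are real-valued; measurability is Lebesgue measurability.
  Quasi-norms take values in [0, \<infinity>], with value \<infinity> exactly off the space.\<close>

abbreviation lmeas :: "(real \<Rightarrow> real) set" where
  "lmeas \<equiv> borel_measurable lebesgue"

definition rearr :: "(real \<Rightarrow> real) \<Rightarrow> real \<Rightarrow> ereal" where
  "rearr f s = Sup {ereal t | t. emeasure lebesgue {x. t < \<bar>f x\<bar>} > ennreal s}"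

definition dilate :: "real \<Rightarrow> (real \<Rightarrow> real) \<Rightarrow> real \<Rightarrow> real" where
  "dilate a f = (\<lambda>t. f (a * t))"

definition quasi_triangle_const :: "((real \<Rightarrow> real) \<Rightarrow> ennreal) \<Rightarrow> real \<Rightarrow> bool" where
  "quasi_triangle_const N K \<longleftrightarrow>
     (\<forall>f g. N (\<lambda>x. f x + g x) \<le> ennreal K * (N f + N g))"

definition ri_space :: "((real \<Rightarrow> real) \<Rightarrow> ennreal) \<Rightarrow> bool" where
  "ri_space N \<longleftrightarrow>
     \<comment> \<open>elements are measurable functions\<close>
     (\<forall>f. N f < \<infinity> \<longrightarrow> f \<in> lmeas) \<and>
     \<comment> \<open>quasi-norm axioms (modulo a.e. equality)\<close>
     (\<forall>f\<in>lmeas. N f = 0 \<longleftrightarrow> (AE x in lebesgue. f x = 0)) \<and>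
     (\<forall>f\<in>lmeas. \<forall>c. N (\<lambda>x. c * f x) = ennreal \<bar>c\<bar> * N f) \<and>
     (\<exists>K. quasi_triangle_const N K) \<and>
     \<comment> \<open>completeness\<close>
     (\<forall>u :: nat \<Rightarrow> real \<Rightarrow> real.
        (\<forall>n. N (u n) < \<infinity>) \<longrightarrow>
        (\<forall>e>0. \<exists>M. \<forall>m\<ge>M. \<forall>n\<ge>M. N (\<lambda>x. u m x - u n x) < ennreal e) \<longrightarrow>
        (\<exists>g. N g < \<infinity> \<and> ((\<lambda>n. N (\<lambda>x. u n x - g x)) \<longlonglongrightarrow> 0))) \<and>
     \<comment> \<open>(1) rearrangement invariance / lattice property\<close>
     (\<forall>f\<in>lmeas. \<forall>g\<in>lmeas. (\<forall>s>0. rearr g s \<le> rearr f s) \<longrightarrow> N g \<le> N f) \<and>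
     \<comment> \<open>(2) simple functions with support of finite measure belong to the space\<close>
     (\<forall>f\<in>lmeas. finite (range f) \<and> emeasure lebesgue {x. f x \<noteq> 0} < \<infinity> \<longrightarrow> N f < \<infinity>) \<and>
     \<comment> \<open>(3) order continuity or Fatou property\<close>
     ((\<forall>u :: nat \<Rightarrow> real \<Rightarrow> real.
         (\<forall>n. u n \<in> lmeas) \<and> (\<forall>n x. 0 \<le> u (Suc n) x \<and> u (Suc n) x \<le> u n x) \<and>
         (\<forall>x. 0 \<le> u 0 x) \<and> (\<forall>x. (\<lambda>n. u n x) \<longlonglongrightarrow> 0) \<and> N (u 0) < \<infinity>
         \<longrightarrow> ((\<lambda>n. N (u n)) \<longlonglongrightarrow> 0))
      \<or>
      (\<forall>(u :: nat \<Rightarrow> real \<Rightarrow> real) f.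
         (\<forall>n. u n \<in> lmeas) \<and> (\<forall>n x. 0 \<le> u n x \<and> u n x \<le> u (Suc n) x) \<and>
         (\<forall>x. (\<lambda>n. u n x) \<longlonglongrightarrow> f x) \<and> (SUP n. N (u n)) < \<infinity>
         \<longrightarrow> N f < \<infinity> \<and> N f = (SUP n. N (u n))))"

definition sum_norm :: "((real \<Rightarrow> real) \<Rightarrow> ennreal) \<Rightarrow> ((real \<Rightarrow> real) \<Rightarrow> ennreal)
    \<Rightarrow> (real \<Rightarrow> real) \<Rightarrow> ennreal" where
  "sum_norm NX NY f = (INF p \<in> {(f', f''). \<forall>x. f' x + f'' x = f x}. NX (fst p) + NY (snd p))"

text \<open>Norm of H(X,Y). If f* is infinite somewhere on (0,\<infinity>), the functions f* 1_[0,1], f* 1_[1,\<infinity>)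
  are not (a.e. finite) real functions, and the norm is taken to be \<infinity>.\<close>
definition H_norm :: "((real \<Rightarrow> real) \<Rightarrow> ennreal) \<Rightarrow> ((real \<Rightarrow> real) \<Rightarrow> ennreal)
    \<Rightarrow> (real \<Rightarrow> real) \<Rightarrow> ennreal" where
  "H_norm NX NY f =
     (if \<exists>s>0. rearr f s = \<infinity> then \<infinity>
      else NX (\<lambda>t. if 0 < t \<and> t \<le> 1 then real_of_ereal (rearr f t) else 0)
         + NY (\<lambda>t. if 1 \<le> t then real_of_ereal (rearr f t) else 0))"

end

theory Submission
  imports Defs
begin

text \<open>For the first inequality split \<open>f\<close> along a set \<open>A\<close> of measure one with
  \<open>{|f| > f*(1)} \<subseteq> A \<subseteq> {|f| \<ge> f*(1)}\<close>: the restrictions of \<open>f\<close> to \<open>A\<close> and to its complement are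
  dominated in distribution by the restrictions of \<open>f*\<close> to \<open>(0, 1]\<close> and to \<open>[1, \<infinity>)\<close>.

  For the second write \<open>f = g + h\<close>, so that \<open>f*(t) \<le> g*(t/2) + h*(t/2)\<close>. Any restriction of
  \<open>t \<mapsto> g*(t/2)\<close> is dominated in distribution by the dilation \<open>D\<^sub>1\<^sub>/\<^sub>4 g\<close>. On \<open>(0, 1]\<close> the
  \<open>h\<close>-term is moved from \<open>Y\<close> to \<open>X\<close> by (i); on \<open>[1, \<infinity>)\<close> the \<open>g\<close>-term is first dominated by the
  step function \<open>g*(\<lfloor>t\<rfloor>/2)\<close>, which (ii) moves from \<open>X\<close> to \<open>Y\<close>. Each of the four terms costs at
  most \<open>c\<^sub>1 c\<^sub>2\<close>, the quasi-triangle inequality a factor \<open>c\<^sub>3\<close>, and adding the two halves a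
  factor \<open>2\<close>.\<close>

section \<open>Distribution function and decreasing rearrangement\<close>

definition distrib_fun :: "(real \<Rightarrow> real) \<Rightarrow> real \<Rightarrow> ennreal" where
  "distrib_fun f t = emeasure lebesgue {x. t < \<bar>f x\<bar>}"

lemma sets_abs_greater [measurable]:
  assumes [measurable]: "f \<in> lmeas"
  shows "{x. t < \<bar>f x\<bar>} \<in> sets lebesgue"
proof -
  have "{x \<in> space lebesgue. t < \<bar>f x\<bar>} \<in> sets lebesgue" by measurable
  then show ?thesis by simp
qed

lemma distrib_fun_neg: "t < 0 \<Longrightarrow> distrib_fun f t = \<infinity>"
  unfolding distrib_fun_def by (subgoal_tac "{x. t < \<bar>f x\<bar>} = UNIV") auto

lemma distrib_fun_antimono: "t \<le> t' \<Longrightarrow> distrib_fun f t' \<le> distrib_fun f t" if "f \<in> lmeas"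
  unfolding distrib_fun_def by (rule emeasure_mono) (use that in auto)

lemma distrib_fun_right_cont:
  assumes f: "f \<in> lmeas"
  shows "distrib_fun f t = (SUP n. distrib_fun f (t + 1 / Suc n))"
proof -
  let ?A = "\<lambda>n. {x. t + 1 / Suc n < \<bar>f x\<bar>}"
  have "incseq ?A"
  proof (rule incseq_SucI)
    fix n
    have "t + 1 / Suc (Suc n) \<le> t + 1 / Suc n" by (simp add: frac_le)
    then show "?A n \<subseteq> ?A (Suc n)" by auto
  qed
  then have "(SUP n. emeasure lebesgue (?A n)) = emeasure lebesgue (\<Union>n. ?A n)"
    by (intro SUP_emeasure_incseq) (use f in auto)
  moreover have "(\<Union>n. ?A n) = {x. t < \<bar>f x\<bar>}"
  proof (intro antisym subsetI)
    fix x assume "x \<in> (\<Union>n. ?A n)"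
    then obtain n where "t + 1 / Suc n < \<bar>f x\<bar>" by blast
    moreover have "0 < 1 / real (Suc n)" by simp
    ultimately have "t < \<bar>f x\<bar>" by linarith
    then show "x \<in> {x. t < \<bar>f x\<bar>}" by simp
  next
    fix x assume "x \<in> {x. t < \<bar>f x\<bar>}"
    then obtain n where "1 / Suc n < \<bar>f x\<bar> - t"
      by (metis diff_gt_0_iff_gt inverse_eq_divide mem_Collect_eq reals_Archimedean)
    then have "t + 1 / Suc n < \<bar>f x\<bar>" by simp
    then show "x \<in> (\<Union>n. ?A n)" by blast
  qed
  ultimately show ?thesis by (simp add: distrib_fun_def)
qed

lemma rearr_gt_iff:
  assumes f: "f \<in> lmeas"
  shows "ereal t < rearr f s \<longleftrightarrow> ennreal s < distrib_fun f t"
proof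
  assume "ereal t < rearr f s"
  then obtain y where "y \<in> {ereal t' |t'. ennreal s < distrib_fun f t'}" "ereal t < y"
    unfolding rearr_def distrib_fun_def less_Sup_iff by blast
  then obtain t' where "ennreal s < distrib_fun f t'" "t \<le> t'" by auto
  then show "ennreal s < distrib_fun f t"
    using distrib_fun_antimono[OF f] order.strict_trans2 by blast
next
  assume "ennreal s < distrib_fun f t"
  then obtain n where n: "ennreal s < distrib_fun f (t + 1 / Suc n)"
    by (subst (asm) distrib_fun_right_cont[OF f]) (auto simp: less_SUP_iff)
  have "ereal t < ereal (t + 1 / Suc n)" by simp
  also have "\<dots> \<le> rearr f s"
    unfolding rearr_def by (rule Sup_upper) (use n in \<open>auto simp: distrib_fun_def\<close>)
  finally show "ereal t < rearr f s" .
qed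

lemma rearr_nonneg:
  assumes f: "f \<in> lmeas"
  shows "0 \<le> rearr f s"
proof (rule ccontr)
  assume "\<not> 0 \<le> rearr f s"
  then have "rearr f s < 0" by simp
  then obtain r where r: "rearr f s < ereal r" "ereal r < 0"
    using ereal_dense2 by blast
  then have "ennreal s < distrib_fun f r" by (simp add: distrib_fun_neg)
  then have "ereal r < rearr f s" using rearr_gt_iff[OF f] by blast
  with r(1) show False by (meson less_asym)
qed

lemma rearr_antimono:
  assumes "s \<le> s'"
  shows "rearr f s' \<le> rearr f s"
  unfolding rearr_def
proof (rule Sup_subset_mono, safe)
  fix t assume "ennreal s' < emeasure lebesgue {x. t < \<bar>f x\<bar>}"
  then have "ennreal s < emeasure lebesgue {x. t < \<bar>f x\<bar>}"
    by (rule order.strict_trans1[OF ennreal_leI[OF assms]])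
  then show "\<exists>t'. ereal t = ereal t' \<and> ennreal s < emeasure lebesgue {x. t' < \<bar>f x\<bar>}"
    by blast
qed

lemma rearr_mono_distrib:
  assumes "\<And>t. distrib_fun g t \<le> distrib_fun f t"
  shows "rearr g s \<le> rearr f s"
  unfolding rearr_def
proof (rule Sup_subset_mono, safe)
  fix t assume "ennreal s < emeasure lebesgue {x. t < \<bar>g x\<bar>}"
  then have "ennreal s < emeasure lebesgue {x. t < \<bar>f x\<bar>}"
    using assms[of t] unfolding distrib_fun_def by (rule order.strict_trans2)
  then show "\<exists>t'. ereal t = ereal t' \<and> ennreal s < emeasure lebesgue {x. t' < \<bar>f x\<bar>}"
    by blast
qed

lemma real_rearr_gt_iff:
  assumes f: "f \<in> lmeas" and fin: "rearr f s \<noteq> \<infinity>"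
  shows "t < real_of_ereal (rearr f s) \<longleftrightarrow> ennreal s < distrib_fun f t"
proof -
  obtain r where "rearr f s = ereal r"
    using fin rearr_nonneg[OF f, of s] by (cases "rearr f s") auto
  then show ?thesis using rearr_gt_iff[OF f, of t s] by simp
qed

lemma borel_measurable_antimono:
  fixes f :: "real \<Rightarrow> 'a::{linorder_topology, second_countable_topology}"
  assumes "antimono f"
  shows "f \<in> borel_measurable borel"
proof (rule borel_measurableI_greater)
  fix y
  have "is_interval {x. y < f x}"
    unfolding is_interval_1 using assms by (auto dest: antimonoD intro: order.strict_trans2)
  then show "{x \<in> space borel. y < f x} \<in> sets borel"
    using real_interval_borel_measurable by simp
qed

lemma rearr_measurable [measurable]: "rearr f \<in> borel_measurable borel"
  by (intro borel_measurable_antimono antimonoI rearr_antimono)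

lemma rearr_add_le:
  assumes g: "g \<in> lmeas" and h: "h \<in> lmeas"
  shows "rearr (\<lambda>x. g x + h x) s \<le> rearr g (s / 2) + rearr h (s / 2)"
proof (cases "rearr g (s / 2) = \<infinity> \<or> rearr h (s / 2) = \<infinity>")
  case True
  then show ?thesis using rearr_nonneg[OF g] rearr_nonneg[OF h] by auto
next
  case False
  then obtain a b where a: "rearr g (s / 2) = ereal a" and b: "rearr h (s / 2) = ereal b"
    using rearr_nonneg[OF g] rearr_nonneg[OF h] by (metis ereal_cases ereal_infty_less_eq(2) not_MInfty_nonneg)
  have gh: "(\<lambda>x. g x + h x) \<in> lmeas" using g h by measurable
  have "distrib_fun (\<lambda>x. g x + h x) (a + b) \<le> emeasure lebesgue ({x. a < \<bar>g x\<bar>} \<union> {x. b < \<bar>h x\<bar>})"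
    unfolding distrib_fun_def by (rule emeasure_mono) (use g h in auto)
  also have "\<dots> \<le> distrib_fun g a + distrib_fun h b"
    unfolding distrib_fun_def by (rule emeasure_subadditive) (use g h in auto)
  also have "\<dots> \<le> ennreal (s / 2) + ennreal (s / 2)"
    using rearr_gt_iff[OF g, of a "s / 2"] rearr_gt_iff[OF h, of b "s / 2"] a b
    by (intro add_mono) (auto simp: not_less)
  also have "\<dots> \<le> ennreal s"
    by (cases "0 \<le> s") (auto simp flip: ennreal_plus simp: ennreal_neg)
  finally show ?thesis using rearr_gt_iff[OF gh, of "a + b" s] a b by (auto simp: not_less)
qed

lemma real_rearr_nonneg: "f \<in> lmeas \<Longrightarrow> 0 \<le> real_of_ereal (rearr f s)"
  by (simp add: real_of_ereal_pos rearr_nonneg)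

lemma real_rearr_antimono:
  assumes g: "g \<in> lmeas" and fin: "\<And>s. 0 < s \<Longrightarrow> rearr g s \<noteq> \<infinity>" and s: "0 < s" "s \<le> s'"
  shows "real_of_ereal (rearr g s') \<le> real_of_ereal (rearr g s)"
  using rearr_nonneg[OF g] rearr_antimono[OF s(2)] fin[OF s(1)]
  by (intro real_of_ereal_positive_mono) auto

lemma real_rearr_add_le:
  assumes g: "g \<in> lmeas" and h: "h \<in> lmeas"
    and fin: "rearr g (s / 2) \<noteq> \<infinity>" "rearr h (s / 2) \<noteq> \<infinity>"
  shows "real_of_ereal (rearr (\<lambda>x. g x + h x) s)
    \<le> real_of_ereal (rearr g (s / 2)) + real_of_ereal (rearr h (s / 2))"
proof -
  obtain a b where a: "rearr g (s / 2) = ereal a" and b: "rearr h (s / 2) = ereal b"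
    using fin rearr_nonneg[OF g] rearr_nonneg[OF h] by (metis ereal_cases ereal_infty_less_eq(2) not_MInfty_nonneg)
  have gh: "(\<lambda>x. g x + h x) \<in> lmeas" using g h by measurable
  have "real_of_ereal (rearr (\<lambda>x. g x + h x) s) \<le> real_of_ereal (ereal (a + b))"
    using rearr_add_le[OF g h, of s] rearr_nonneg[OF gh, of s] a b
    by (intro real_of_ereal_positive_mono) auto
  then show ?thesis using a b by simp
qed

lemma rearr_add_finite:
  assumes g: "g \<in> lmeas" and h: "h \<in> lmeas"
    and fin: "rearr g (s / 2) \<noteq> \<infinity>" "rearr h (s / 2) \<noteq> \<infinity>"
  shows "rearr (\<lambda>x. g x + h x) s \<noteq> \<infinity>"
  using rearr_add_le[OF g h, of s] fin rearr_nonneg[OF g, of "s / 2"] rearr_nonneg[OF h, of "s / 2"]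
  by (cases "rearr g (s / 2)"; cases "rearr h (s / 2)") auto

section \<open>Rearrangement invariant spaces\<close>

lemma ri_space_measurable: "ri_space N \<Longrightarrow> N f < \<infinity> \<Longrightarrow> f \<in> lmeas"
  unfolding ri_space_def by (drule conjunct1) blast

lemma ri_space_eq_0_iff: "ri_space N \<Longrightarrow> f \<in> lmeas \<Longrightarrow> N f = 0 \<longleftrightarrow> (AE x in lebesgue. f x = 0)"
  unfolding ri_space_def by (drule conjunct2, drule conjunct1) blast

lemma ri_space_scale: "ri_space N \<Longrightarrow> f \<in> lmeas \<Longrightarrow> N (\<lambda>x. c * f x) = ennreal \<bar>c\<bar> * N f"
  unfolding ri_space_def by (drule conjunct2, drule conjunct2, drule conjunct1) blast

lemma ri_space_mono_rearr:
  "ri_space N \<Longrightarrow> f \<in> lmeas \<Longrightarrow> g \<in> lmeas \<Longrightarrow> (\<And>s. 0 < s \<Longrightarrow> rearr g s \<le> rearr f s) \<Longrightarrow> N g \<le> N f"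
  unfolding ri_space_def by (drule conjunct2, drule conjunct2, drule conjunct2, drule conjunct2,
      drule conjunct2, drule conjunct1) blast

lemma ri_space_simple_finite:
  "ri_space N \<Longrightarrow> f \<in> lmeas \<Longrightarrow> finite (range f) \<Longrightarrow> emeasure lebesgue {x. f x \<noteq> 0} < \<infinity> \<Longrightarrow> N f < \<infinity>"
  unfolding ri_space_def by (drule conjunct2, drule conjunct2, drule conjunct2, drule conjunct2,
      drule conjunct2, drule conjunct2, drule conjunct1) blast

lemma ri_space_mono_distrib:
  assumes N: "ri_space N" and f: "f \<in> lmeas" and g: "g \<in> lmeas"
    and le: "\<And>t. 0 \<le> t \<Longrightarrow> distrib_fun g t \<le> distrib_fun f t"
  shows "N g \<le> N f"
proof (rule ri_space_mono_rearr[OF N f g], rule rearr_mono_distrib)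
  fix t
  show "distrib_fun g t \<le> distrib_fun f t"
    using le[of t] distrib_fun_neg[of t] by (cases "0 \<le> t") auto
qed

lemma ri_space_mono_abs:
  assumes N: "ri_space N" and f: "f \<in> lmeas" and g: "g \<in> lmeas"
    and le: "\<And>x. \<bar>g x\<bar> \<le> \<bar>f x\<bar>"
  shows "N g \<le> N f"
proof (rule ri_space_mono_distrib[OF N f g])
  fix t :: real
  show "distrib_fun g t \<le> distrib_fun f t"
    unfolding distrib_fun_def by (rule emeasure_mono) (use le f in \<open>auto intro: order.strict_trans2\<close>)
qed

lemma indicator_interval_measurable: "(indicator {a..<b} :: real \<Rightarrow> real) \<in> lmeas"
  by (intro borel_measurable_indicator) auto

lemma ri_space_indicator_finite:
  assumes N: "ri_space N"
  shows "N (indicator {a..<b} :: real \<Rightarrow> real) < \<infinity>"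
proof (rule ri_space_simple_finite[OF N indicator_interval_measurable])
  show "finite (range (indicator {a..<b} :: real \<Rightarrow> real))"
    by (rule finite_subset[of _ "{0, 1}"]) (auto simp: indicator_def)
  have "{x. (indicator {a..<b} x :: real) \<noteq> 0} = {a..<b}" by (auto simp: indicator_def)
  then show "emeasure lebesgue {x. (indicator {a..<b} x :: real) \<noteq> 0} < \<infinity>"
    by (cases "a \<le> b") auto
qed

lemma ri_space_indicator_pos:
  assumes N: "ri_space N" and ab: "a < b"
  shows "0 < N (indicator {a..<b} :: real \<Rightarrow> real)"
proof (rule ccontr)
  assume "\<not> ?thesis"
  then have "AE x in lebesgue. (indicator {a..<b} x :: real) = 0"
    using ri_space_eq_0_iff[OF N indicator_interval_measurable] by simp
  then have "{a..<b} \<in> null_sets lebesgue"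
    by (subst (asm) AE_iff_measurable[where N = "{a..<b}"]) (auto simp: indicator_def)
  then have "emeasure lebesgue {a..<b} = 0" by (rule null_setsD1)
  with ab show False by simp
qed

text \<open>If \<open>g*(s) = \<infinity>\<close>, then \<open>n\<close> times the indicator of \<open>[0, s)\<close> is dominated in distribution
  by \<open>g\<close> for every \<open>n\<close>.\<close>
lemma ri_space_rearr_finite:
  assumes N: "ri_space N" and g: "g \<in> lmeas" and Ng: "N g < \<infinity>" and s: "0 < s"
  shows "rearr g s \<noteq> \<infinity>"
proof
  assume inf: "rearr g s = \<infinity>"
  define u where "u = (indicator {0..<s} :: real \<Rightarrow> real)"
  have u: "u \<in> lmeas" unfolding u_def by (rule indicator_interval_measurable)
  have "N (\<lambda>x. real n * u x) \<le> N g" for n :: nat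
  proof (rule ri_space_mono_distrib[OF N g])
    show "(\<lambda>x. real n * u x) \<in> lmeas" using u by measurable
  next
    fix t :: real assume t: "0 \<le> t"
    have "distrib_fun (\<lambda>x. real n * u x) t \<le> emeasure lebesgue {0..<s}"
      unfolding distrib_fun_def
      by (rule emeasure_mono) (use t in \<open>auto simp: u_def indicator_def split: if_splits\<close>)
    also have "\<dots> < distrib_fun g t"
      using rearr_gt_iff[OF g, of t s] inf s by simp
    finally show "distrib_fun (\<lambda>x. real n * u x) t \<le> distrib_fun g t" by simp
  qed
  then have le: "ennreal (real n) * N u \<le> N g" for n :: nat
    by (metis ri_space_scale[OF N u] abs_of_nat)
  have "0 < N u" "N u < \<infinity>"
    unfolding u_def using ri_space_indicator_pos[OF N s] ri_space_indicator_finite[OF N] by auto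
  then obtain c where c: "N u = ennreal c" "0 < c"
    by (cases "N u") (auto simp: ennreal_less_zero_iff)
  obtain r where r: "N g = ennreal r" "0 \<le> r" using Ng by (cases "N g") auto
  obtain n :: nat where "r / c < real n" using reals_Archimedean2 by blast
  then have "r < real n * c" using c(2) by (simp add: field_simps)
  moreover have "real n * c \<le> r" using le[of n] c r by (simp flip: ennreal_mult)
  ultimately show False by simp
qed

lemma quasi_triangle_const_ge_1:
  assumes N: "ri_space N" and K: "quasi_triangle_const N K"
  shows "1 \<le> K"
proof -
  define u where "u = (indicator {0..<1} :: real \<Rightarrow> real)"
  have "N (\<lambda>x. u x + 0) \<le> ennreal K * (N u + N (\<lambda>x. 0))"
    by (rule K[unfolded quasi_triangle_const_def, rule_format])
  moreover have "N (\<lambda>x. 0) = 0" using ri_space_eq_0_iff[OF N] by simp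
  ultimately have le: "N u \<le> ennreal K * N u" by simp
  have "0 < N u" "N u < \<infinity>"
    unfolding u_def using ri_space_indicator_pos[OF N] ri_space_indicator_finite[OF N] by auto
  then obtain a where a: "N u = ennreal a" "0 < a"
    by (cases "N u") (auto simp: ennreal_less_zero_iff)
  have "0 \<le> K"
  proof (rule ccontr)
    assume "\<not> 0 \<le> K"
    then have "ennreal K = 0" by (simp add: ennreal_eq_0_iff)
    with le a show False by simp
  qed
  with le a have "1 * a \<le> K * a" by (simp flip: ennreal_mult)
  with a(2) show ?thesis by (simp add: mult_le_cancel_right)
qed

lemma ri_space_quasi_triangle_dominated:
  assumes N: "ri_space N" and K: "quasi_triangle_const N K"
    and f: "f \<in> lmeas" and g: "g \<in> lmeas" and h: "h \<in> lmeas"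
    and le: "\<And>x. \<bar>f x\<bar> \<le> \<bar>g x + h x\<bar>"
  shows "N f \<le> ennreal K * (N g + N h)"
proof -
  have "N f \<le> N (\<lambda>x. g x + h x)"
    by (rule ri_space_mono_abs[OF N _ f le]) (use g h in measurable)
  also have "\<dots> \<le> ennreal K * (N g + N h)"
    using K unfolding quasi_triangle_const_def by blast
  finally show ?thesis .
qed

section \<open>Dilations\<close>

lemma dilate_measurable: "g \<in> lmeas \<Longrightarrow> dilate a g \<in> lmeas"
  unfolding dilate_def using measurable_compose[OF lebesgue_measurable_scaling[of a], of g] by simp

lemma distrib_fun_dilate:
  assumes "a \<noteq> 0"
  shows "distrib_fun (dilate a g) t = ennreal (1 / \<bar>a\<bar>) * distrib_fun g t"
proof -
  have "{x. t < \<bar>dilate a g x\<bar>} = (\<lambda>y. (1 / a) *\<^sub>R y + 0) ` {y. t < \<bar>g y\<bar>}"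
  proof safe
    fix x assume "t < \<bar>dilate a g x\<bar>"
    then show "x \<in> (\<lambda>y. (1 / a) *\<^sub>R y + 0) ` {y. t < \<bar>g y\<bar>}"
      using assms by (intro image_eqI[of _ _ "a * x"]) (auto simp: dilate_def)
  qed (use assms in \<open>auto simp: dilate_def\<close>)
  then show ?thesis
    unfolding distrib_fun_def using emeasure_lebesgue_affine[of "1 / a" 0 "{y. t < \<bar>g y\<bar>}"]
    by (simp add: ennreal_power)
qed

text \<open>Where \<open>g* \<circ> \<psi>\<close> exceeds \<open>\<tau>\<close> we have \<open>\<psi> t < \<mu>\<close> with \<open>\<mu> = distrib_fun g \<tau>\<close>, so by \<open>box\<close> this
  set lies in an interval of length \<open>2 \<mu> \<le> \<mu> / a = distrib_fun (dilate a g) \<tau>\<close>.\<close>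
lemma distrib_fun_rearr_comp_le_dilate:
  assumes g: "g \<in> lmeas" and fin: "\<And>s. 0 < s \<Longrightarrow> rearr g s \<noteq> \<infinity>"
    and a: "0 < a" "a \<le> 1 / 2"
    and pos: "\<And>t. t \<in> I \<Longrightarrow> 0 < \<psi> t"
    and box: "\<And>t c. t \<in> I \<Longrightarrow> \<psi> t < c \<Longrightarrow> b \<le> t \<and> t \<le> b + 2 * c"
    and \<tau>: "0 \<le> \<tau>"
  shows "distrib_fun (\<lambda>t. if t \<in> I then real_of_ereal (rearr g (\<psi> t)) else 0) \<tau>
    \<le> distrib_fun (dilate a g) \<tau>"
proof (cases "distrib_fun g \<tau> = \<infinity>")
  case True
  then show ?thesis using a by (simp add: distrib_fun_dilate ennreal_mult_top)
next
  case False
  then obtain m where m: "distrib_fun g \<tau> = ennreal m" "0 \<le> m" by (cases "distrib_fun g \<tau>") auto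
  have "{t. \<tau> < \<bar>if t \<in> I then real_of_ereal (rearr g (\<psi> t)) else 0\<bar>} \<subseteq> {b..b + 2 * m}"
  proof
    fix t assume "t \<in> {t. \<tau> < \<bar>if t \<in> I then real_of_ereal (rearr g (\<psi> t)) else 0\<bar>}"
    then have t: "t \<in> I" and "\<tau> < \<bar>real_of_ereal (rearr g (\<psi> t))\<bar>" using \<tau> by (auto split: if_splits)
    then have "\<tau> < real_of_ereal (rearr g (\<psi> t))" by (simp add: real_of_ereal_pos rearr_nonneg[OF g])
    then have "ennreal (\<psi> t) < ennreal m" using real_rearr_gt_iff[OF g fin[OF pos[OF t]]] m by simp
    then have "\<psi> t < m" by (simp add: ennreal_less_iff pos[OF t, THEN less_imp_le])
    then show "t \<in> {b..b + 2 * m}" using box[OF t] by simp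
  qed
  then have "distrib_fun (\<lambda>t. if t \<in> I then real_of_ereal (rearr g (\<psi> t)) else 0) \<tau>
      \<le> emeasure lebesgue {b..b + 2 * m}"
    unfolding distrib_fun_def by (rule emeasure_mono) simp
  also have "\<dots> = ennreal (2 * m)" using m by simp
  also have "\<dots> \<le> ennreal (1 / a * m)"
    using a m by (intro ennreal_leI mult_right_mono) (auto simp: field_simps)
  also have "\<dots> = distrib_fun (dilate a g) \<tau>"
    using a m by (simp add: distrib_fun_dilate flip: ennreal_mult')
  finally show ?thesis .
qed

lemma ri_space_rearr_comp_le_dilate:
  assumes N: "ri_space N" and g: "g \<in> lmeas" and fin: "\<And>s. 0 < s \<Longrightarrow> rearr g s \<noteq> \<infinity>"
    and a: "0 < a" "a \<le> 1 / 2"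
    and I: "I \<in> sets borel" and \<psi>: "\<psi> \<in> borel_measurable borel"
    and pos: "\<And>t. t \<in> I \<Longrightarrow> 0 < \<psi> t"
    and box: "\<And>t c. t \<in> I \<Longrightarrow> \<psi> t < c \<Longrightarrow> b \<le> t \<and> t \<le> b + 2 * c"
  shows "N (\<lambda>t. if t \<in> I then real_of_ereal (rearr g (\<psi> t)) else 0) \<le> N (dilate a g)"
proof (rule ri_space_mono_distrib[OF N dilate_measurable[OF g]])
  show "(\<lambda>t. if t \<in> I then real_of_ereal (rearr g (\<psi> t)) else 0) \<in> lmeas"
    by (rule measurable_completion) (use I \<psi> in measurable)
qed (rule distrib_fun_rearr_comp_le_dilate[OF g fin a pos box])

definition rearr_half :: "real set \<Rightarrow> (real \<Rightarrow> real) \<Rightarrow> real \<Rightarrow> real" where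
  "rearr_half I g = (\<lambda>t. if t \<in> I then real_of_ereal (rearr g (t / 2)) else 0)"

lemma rearr_half_measurable:
  assumes "I \<in> sets borel"
  shows "rearr_half I g \<in> lmeas"
  unfolding rearr_half_def by (rule measurable_completion) (use assms in measurable)

lemma ri_space_rearr_half_le_dilate:
  assumes N: "ri_space N" and g: "g \<in> lmeas" and fin: "\<And>s. 0 < s \<Longrightarrow> rearr g s \<noteq> \<infinity>"
    and I: "I \<in> sets borel" "I \<subseteq> {0<..}"
  shows "N (rearr_half I g) \<le> N (dilate (1 / 4) g)"
  unfolding rearr_half_def
  by (rule ri_space_rearr_comp_le_dilate[OF N g fin _ _ I(1), where b = 0]) (use I(2) in auto)

section \<open>The two halves of the \<open>H\<close>-norm\<close>

definition rearr_head :: "(real \<Rightarrow> real) \<Rightarrow> real \<Rightarrow> real" where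
  "rearr_head f = (\<lambda>t. if 0 < t \<and> t \<le> 1 then real_of_ereal (rearr f t) else 0)"

definition rearr_tail :: "(real \<Rightarrow> real) \<Rightarrow> real \<Rightarrow> real" where
  "rearr_tail f = (\<lambda>t. if 1 \<le> t then real_of_ereal (rearr f t) else 0)"

lemma H_norm_eq:
  "(\<And>s. 0 < s \<Longrightarrow> rearr f s \<noteq> \<infinity>) \<Longrightarrow> H_norm NX NY f = NX (rearr_head f) + NY (rearr_tail f)"
  by (auto simp: H_norm_def rearr_head_def rearr_tail_def)

lemma rearr_head_measurable: "rearr_head f \<in> lmeas"
  unfolding rearr_head_def by (rule measurable_completion) measurable

lemma rearr_tail_measurable: "rearr_tail f \<in> lmeas"
  unfolding rearr_tail_def by (rule measurable_completion) measurable

lemma emeasure_Ioc_0_1_less_ennreal: "emeasure lebesgue {t. 0 < t \<and> t \<le> 1 \<and> ennreal t < m} = min 1 m"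
proof (cases m rule: ennreal_cases)
  case (real r)
  show ?thesis
  proof (cases "r \<le> 1")
    case True
    then have "{t. 0 < t \<and> t \<le> 1 \<and> ennreal t < m} = {0<..<r}"
      using real by (auto simp: ennreal_less_iff)
    then show ?thesis using real True by (simp add: min_def)
  next
    case False
    then have "{t. 0 < t \<and> t \<le> 1 \<and> ennreal t < m} = {0<..1}"
      using real by (auto simp: ennreal_less_iff)
    then show ?thesis using real False by (simp add: min_def)
  qed
next
  case top
  then have "{t. 0 < t \<and> t \<le> 1 \<and> ennreal t < m} = {0<..1}" by auto
  then show ?thesis using top by simp
qed

lemma emeasure_lborel_Ici: "emeasure lborel {a::real..} = \<infinity>"
proof (rule ccontr)
  assume "emeasure lborel {a..} \<noteq> \<infinity>"
  then obtain r where r: "emeasure lborel {a..} = ennreal r" "0 \<le> r"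
    by (cases "emeasure lborel {a..}" rule: ennreal_cases) auto
  have "emeasure lborel {a..a + (r + 1)} \<le> emeasure lborel {a..}"
    by (rule emeasure_mono) auto
  with r show False by simp
qed

lemma emeasure_Ici_1_less_ennreal: "emeasure lebesgue {t. 1 \<le> t \<and> ennreal t < m} = m - 1"
proof (cases m rule: ennreal_cases)
  case (real r)
  then have "{t. 1 \<le> t \<and> ennreal t < m} = {1..<r}" by (auto simp: ennreal_less_iff)
  moreover have "emeasure lebesgue {1..<r} = ennreal r - 1"
    by (cases "1 \<le> r") (auto simp: ennreal_minus ennreal_neg simp flip: ennreal_1)
  ultimately show ?thesis using real by simp
next
  case top
  then have "{t. 1 \<le> t \<and> ennreal t < m} = {1..}" by auto
  then show ?thesis using top by (simp add: emeasure_lborel_Ici)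
qed

lemma distrib_fun_rearr_head:
  assumes f: "f \<in> lmeas" and fin: "\<And>s. 0 < s \<Longrightarrow> rearr f s \<noteq> \<infinity>" and \<tau>: "0 \<le> \<tau>"
  shows "distrib_fun (rearr_head f) \<tau> = min 1 (distrib_fun f \<tau>)"
proof -
  have "{t. \<tau> < \<bar>rearr_head f t\<bar>} = {t. 0 < t \<and> t \<le> 1 \<and> ennreal t < distrib_fun f \<tau>}"
    using \<tau> real_rearr_gt_iff[OF f fin]
    by (auto simp: rearr_head_def real_of_ereal_pos rearr_nonneg[OF f])
  then show ?thesis by (simp add: distrib_fun_def emeasure_Ioc_0_1_less_ennreal)
qed

lemma distrib_fun_rearr_tail:
  assumes f: "f \<in> lmeas" and fin: "\<And>s. 0 < s \<Longrightarrow> rearr f s \<noteq> \<infinity>" and \<tau>: "0 \<le> \<tau>"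
  shows "distrib_fun (rearr_tail f) \<tau> = distrib_fun f \<tau> - 1"
proof -
  have "{t. \<tau> < \<bar>rearr_tail f t\<bar>} = {t. 1 \<le> t \<and> ennreal t < distrib_fun f \<tau>}"
    using \<tau> real_rearr_gt_iff[OF f fin]
    by (auto simp: rearr_tail_def real_of_ereal_pos rearr_nonneg[OF f])
  then show ?thesis by (simp add: distrib_fun_def emeasure_Ici_1_less_ennreal)
qed

lemma
  assumes g: "g \<in> lmeas" and h: "h \<in> lmeas"
    and gfin: "\<And>s. 0 < s \<Longrightarrow> rearr g s \<noteq> \<infinity>" and hfin: "\<And>s. 0 < s \<Longrightarrow> rearr h s \<noteq> \<infinity>"
  shows abs_rearr_head_add_le:
      "\<bar>rearr_head (\<lambda>x. g x + h x) t\<bar> \<le> \<bar>rearr_half {0<..1} g t + rearr_half {0<..1} h t\<bar>"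
    and abs_rearr_tail_add_le:
      "\<bar>rearr_tail (\<lambda>x. g x + h x) t\<bar> \<le> \<bar>rearr_half {1..} g t + rearr_half {1..} h t\<bar>"
proof -
  have gh: "(\<lambda>x. g x + h x) \<in> lmeas" using g h by measurable
  have "real_of_ereal (rearr (\<lambda>x. g x + h x) t)
      \<le> real_of_ereal (rearr g (t / 2)) + real_of_ereal (rearr h (t / 2))" if "0 < t"
    using real_rearr_add_le[OF g h gfin hfin] that by simp
  then show "\<bar>rearr_head (\<lambda>x. g x + h x) t\<bar> \<le> \<bar>rearr_half {0<..1} g t + rearr_half {0<..1} h t\<bar>"
    and "\<bar>rearr_tail (\<lambda>x. g x + h x) t\<bar> \<le> \<bar>rearr_half {1..} g t + rearr_half {1..} h t\<bar>"
    using real_rearr_nonneg[OF g] real_rearr_nonneg[OF h] real_rearr_nonneg[OF gh]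
    by (auto simp: rearr_head_def rearr_tail_def rearr_half_def)
qed

section \<open>The \<open>X + Y\<close> norm is bounded by the \<open>H\<close>-norm\<close>

lemma emeasure_union_Icc_lipschitz:
  fixes B E :: "real set"
  assumes B: "B \<in> sets lebesgue" and E: "E \<in> sets lebesgue" and r: "0 \<le> r" "r \<le> r'"
  shows "emeasure lebesgue (B \<union> E \<inter> {-r'..r'}) \<le> emeasure lebesgue (B \<union> E \<inter> {-r..r}) + ennreal (2 * (r' - r))"
proof -
  have "emeasure lebesgue (B \<union> E \<inter> {-r'..r'})
      \<le> emeasure lebesgue ((B \<union> E \<inter> {-r..r}) \<union> ({-r'..-r} \<union> {r..r'}))"
    by (rule emeasure_mono) (auto intro!: sets.Un sets.Int simp: B E)
  also have "\<dots> \<le> emeasure lebesgue (B \<union> E \<inter> {-r..r}) + emeasure lebesgue ({-r'..-r} \<union> {r..r'})"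
    by (rule emeasure_subadditive) (auto intro!: sets.Un sets.Int simp: B E)
  also have "emeasure lebesgue ({-r'..-r} \<union> {r..r'}) \<le> emeasure lebesgue {-r'..-r} + emeasure lebesgue {r..r'}"
    by (rule emeasure_subadditive) auto
  also have "\<dots> = ennreal (2 * (r' - r))"
    using r by (simp flip: ennreal_plus)
  finally show ?thesis by (simp add: add_left_mono)
qed

lemma emeasure_union_Icc_finite:
  fixes B E :: "real set"
  assumes B: "B \<in> sets lebesgue" and Bfin: "emeasure lebesgue B < \<infinity>"
  shows "emeasure lebesgue (B \<union> E \<inter> {-r..r}) < \<infinity>"
proof -
  have "emeasure lebesgue (B \<union> E \<inter> {-r..r}) \<le> emeasure lebesgue (B \<union> {-r..r})"
    by (rule emeasure_mono) (use B in auto)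
  also have "\<dots> \<le> emeasure lebesgue B + emeasure lebesgue {-r..r}"
    by (rule emeasure_subadditive) (use B in auto)
  also have "\<dots> < \<infinity>"
    using Bfin by (cases "-r \<le> r") (auto simp: less_top)
  finally show ?thesis .
qed

lemma continuous_on_measure_union_Icc:
  fixes B E :: "real set"
  assumes B: "B \<in> sets lebesgue" and E: "E \<in> sets lebesgue" and Bfin: "emeasure lebesgue B < \<infinity>"
  shows "continuous_on {0..} (\<lambda>r. measure lebesgue (B \<union> E \<inter> {-r..r}))"
proof (rule lipschitz_on_continuous_on)
  define e where "e r = measure lebesgue (B \<union> E \<inter> {-r..r})" for r
  have e: "emeasure lebesgue (B \<union> E \<inter> {-r..r}) = ennreal (e r)" for r
    unfolding e_def using emeasure_union_Icc_finite[OF B Bfin]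
    by (intro emeasure_eq_ennreal_measure) (simp add: less_top)
  have lip: "\<bar>e x - e y\<bar> \<le> 2 * \<bar>x - y\<bar>" if xy: "0 \<le> x" "x \<le> y" for x y
  proof -
    have "ennreal (e x) \<le> ennreal (e y)"
      unfolding e[symmetric] by (rule emeasure_mono) (use xy in \<open>auto intro!: sets.Un sets.Int simp: B E\<close>)
    then have "e x \<le> e y" by (simp add: e_def)
    have "ennreal (e y) \<le> ennreal (e x + 2 * (y - x))"
      using emeasure_union_Icc_lipschitz[OF B E xy] xy by (simp add: e e_def ennreal_plus)
    then have "e y \<le> e x + 2 * (y - x)" using xy by (subst (asm) ennreal_le_iff) (auto simp: e_def)
    with \<open>e x \<le> e y\<close> show ?thesis by simp
  qed
  show "2-lipschitz_on {0..} e"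
  proof (rule lipschitz_onI)
    show "dist (e x) (e y) \<le> 2 * dist x y" if "x \<in> {0..}" "y \<in> {0..}" for x y
      using lip[of x y] lip[of y x] that by (cases "x \<le> y") (auto simp: dist_real_def abs_minus_commute)
  qed simp
qed

lemma SUP_emeasure_union_Icc:
  fixes B E :: "real set"
  assumes B: "B \<in> sets lebesgue" and E: "E \<in> sets lebesgue" and BE: "B \<subseteq> E"
  shows "(SUP n. emeasure lebesgue (B \<union> E \<inter> {-real n..real n})) = emeasure lebesgue E"
proof -
  have "(SUP n. emeasure lebesgue (B \<union> E \<inter> {-real n..real n}))
      = emeasure lebesgue (\<Union>n. B \<union> E \<inter> {-real n..real n})"
    by (rule SUP_emeasure_incseq) (auto intro!: sets.Un sets.Int simp: B E incseq_def)
  also have "(\<Union>n. B \<union> E \<inter> {-real n..real n}) = E"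
  proof
    show "E \<subseteq> (\<Union>n. B \<union> E \<inter> {-real n..real n})"
    proof
      fix x assume "x \<in> E"
      obtain n :: nat where "\<bar>x\<bar> \<le> real n" using real_arch_simple by blast
      with \<open>x \<in> E\<close> show "x \<in> (\<Union>n. B \<union> E \<inter> {-real n..real n})" by (auto simp: abs_le_iff)
    qed
  qed (use BE in auto)
  finally show ?thesis .
qed

text \<open>The witness is \<open>B \<union> E \<inter> [-r, r]\<close>, with \<open>r\<close> given by the intermediate value theorem.\<close>
lemma exists_lebesgue_set_between:
  fixes B E :: "real set"
  assumes B: "B \<in> sets lebesgue" and E: "E \<in> sets lebesgue" and BE: "B \<subseteq> E"
    and Bv: "emeasure lebesgue B \<le> ennreal v" and vE: "ennreal v \<le> emeasure lebesgue E" and v: "0 \<le> v"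
  shows "\<exists>A \<in> sets lebesgue. B \<subseteq> A \<and> A \<subseteq> E \<and> emeasure lebesgue A = ennreal v"
proof (cases "ennreal v = emeasure lebesgue E")
  case True
  then show ?thesis using E BE by auto
next
  case False
  with vE have vE: "ennreal v < emeasure lebesgue E" by simp
  define S where "S r = B \<union> E \<inter> {-r..r}" for r :: real
  have S: "S r \<in> sets lebesgue" for r unfolding S_def by (auto intro!: sets.Un sets.Int simp: B E)
  have Bfin: "emeasure lebesgue B < \<infinity>" using Bv by (simp add: le_less_trans)
  have e: "emeasure lebesgue (S r) = ennreal (measure lebesgue (S r))" for r
    unfolding S_def using emeasure_union_Icc_finite[OF B Bfin]
    by (intro emeasure_eq_ennreal_measure) (simp add: less_top)
  have "ennreal v < (SUP n. emeasure lebesgue (S (real n)))"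
    using vE SUP_emeasure_union_Icc[OF B E BE] by (simp add: S_def)
  then obtain n where "ennreal v < emeasure lebesgue (S (real n))" by (auto simp: less_SUP_iff)
  then have vn: "v \<le> measure lebesgue (S (real n))" using v by (simp add: e ennreal_less_iff)
  have "emeasure lebesgue (S 0) \<le> emeasure lebesgue B + emeasure lebesgue (E \<inter> {-0..0})"
    unfolding S_def by (rule emeasure_subadditive) (auto intro!: sets.Int simp: B E)
  also have "emeasure lebesgue (E \<inter> {-0..0}) \<le> emeasure lebesgue {0::real..0}"
    by (rule emeasure_mono) auto
  finally have "ennreal (measure lebesgue (S 0)) \<le> ennreal v" using Bv by (simp add: e)
  then have v0: "measure lebesgue (S 0) \<le> v" using v by simp
  have "continuous_on {0..real n} (\<lambda>r. measure lebesgue (S r))"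
    unfolding S_def by (rule continuous_on_subset[OF continuous_on_measure_union_Icc[OF B E Bfin]]) auto
  then obtain r where "measure lebesgue (S r) = v"
    using IVT'[of "\<lambda>r. measure lebesgue (S r)" 0 v "real n"] v0 vn by auto
  then show ?thesis using S[of r] BE e[of r] by (intro bexI[of _ "S r"]) (auto simp: S_def)
qed

lemma emeasure_abs_ge_lower_bound:
  assumes f: "f \<in> lmeas" and t0: "t0 < \<theta>" "distrib_fun f t0 \<noteq> \<infinity>"
    and le: "\<And>t. t < \<theta> \<Longrightarrow> c \<le> distrib_fun f t"
  shows "c \<le> emeasure lebesgue {x. \<theta> \<le> \<bar>f x\<bar>}"
proof -
  define D where "D n = {x. \<theta> - (\<theta> - t0) / Suc n < \<bar>f x\<bar>}" for n :: nat
  have D_le: "\<theta> - (\<theta> - t0) / Suc n < \<theta>" "t0 \<le> \<theta> - (\<theta> - t0) / Suc n" for n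
    using t0(1) by (auto simp: field_simps intro: mult_right_mono)
  have Ds: "range D \<subseteq> sets lebesgue" using f by (auto simp: D_def)
  have dec: "decseq D"
    unfolding D_def decseq_def using t0(1)
    by (auto intro: order.strict_trans1[rotated] simp: frac_le)
  have fin: "emeasure lebesgue (D n) \<noteq> \<infinity>" for n
    using distrib_fun_antimono[OF f D_le(2)[of n]] t0(2)
    by (auto simp: D_def distrib_fun_def top_unique)
  have "(INF n. emeasure lebesgue (D n)) = emeasure lebesgue (\<Inter>n. D n)"
    by (rule INF_emeasure_decseq[OF Ds dec fin])
  also have "(\<Inter>n. D n) = {x. \<theta> \<le> \<bar>f x\<bar>}"
  proof (intro antisym subsetI)
    fix x assume x: "x \<in> (\<Inter>n. D n)"
    show "x \<in> {x. \<theta> \<le> \<bar>f x\<bar>}"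
    proof (rule ccontr)
      assume "x \<notin> {x. \<theta> \<le> \<bar>f x\<bar>}"
      then have "0 < (\<theta> - \<bar>f x\<bar>) / (\<theta> - t0)" using t0(1) by simp
      then obtain n where "1 / Suc n < (\<theta> - \<bar>f x\<bar>) / (\<theta> - t0)"
        by (metis inverse_eq_divide reals_Archimedean)
      then have "(\<theta> - t0) / Suc n < \<theta> - \<bar>f x\<bar>" using t0(1) by (simp add: field_simps)
      moreover have "x \<in> D n" using x by blast
      ultimately show False by (simp add: D_def)
    qed
  next
    fix x assume "x \<in> {x. \<theta> \<le> \<bar>f x\<bar>}"
    then have "\<theta> - (\<theta> - t0) / Suc n < \<bar>f x\<bar>" for n using D_le(1)[of n] by simp
    then show "x \<in> (\<Inter>n. D n)" unfolding D_def by blast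
  qed
  finally have "emeasure lebesgue {x. \<theta> \<le> \<bar>f x\<bar>} = (INF n. emeasure lebesgue (D n))" ..
  moreover have "c \<le> emeasure lebesgue (D n)" for n
    using le[OF D_le(1)] by (simp add: D_def distrib_fun_def)
  ultimately show ?thesis by (simp add: le_INF_iff)
qed

lemma exists_level_set_split:
  assumes f: "f \<in> lmeas" and le1: "distrib_fun f \<theta> \<le> 1"
    and gt1: "\<And>t. t < \<theta> \<Longrightarrow> 1 < distrib_fun f t"
  shows "\<exists>A \<in> sets lebesgue. {x. \<theta> < \<bar>f x\<bar>} \<subseteq> A \<and> emeasure lebesgue A \<le> 1 \<and>
    (\<forall>t < \<theta>. emeasure lebesgue ({x. t < \<bar>f x\<bar>} - A) \<le> distrib_fun f t - 1)"
proof (cases "\<forall>t < \<theta>. distrib_fun f t = \<infinity>")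
  case True
  then show ?thesis
    using f le1 by (intro bexI[of _ "{x. \<theta> < \<bar>f x\<bar>}"]) (auto simp: distrib_fun_def)
next
  case False
  then obtain t0 where t0: "t0 < \<theta>" "distrib_fun f t0 \<noteq> \<infinity>" by blast
  have E: "{x. \<theta> \<le> \<bar>f x\<bar>} \<in> sets lebesgue"
  proof -
    have "{x \<in> space lebesgue. \<theta> \<le> \<bar>f x\<bar>} \<in> sets lebesgue" using f by measurable
    then show ?thesis by simp
  qed
  have BE: "{x. \<theta> < \<bar>f x\<bar>} \<subseteq> {x. \<theta> \<le> \<bar>f x\<bar>}" by auto
  have E1: "ennreal 1 \<le> emeasure lebesgue {x. \<theta> \<le> \<bar>f x\<bar>}"
    by (rule emeasure_abs_ge_lower_bound[OF f t0]) (simp add: gt1 less_imp_le)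
  have B1: "emeasure lebesgue {x. \<theta> < \<bar>f x\<bar>} \<le> ennreal 1"
    using le1 by (simp add: distrib_fun_def)
  obtain A where A: "A \<in> sets lebesgue" "{x. \<theta> < \<bar>f x\<bar>} \<subseteq> A" "A \<subseteq> {x. \<theta> \<le> \<bar>f x\<bar>}"
    "emeasure lebesgue A = 1"
    using exists_lebesgue_set_between[OF sets_abs_greater[OF f] E BE B1 E1] by auto
  have "emeasure lebesgue ({x. t < \<bar>f x\<bar>} - A) \<le> distrib_fun f t - 1" if "t < \<theta>" for t
  proof -
    have "A \<subseteq> {x. t < \<bar>f x\<bar>}" using A(3) that by auto
    then have "emeasure lebesgue ({x. t < \<bar>f x\<bar>} - A) = distrib_fun f t - emeasure lebesgue A"
      unfolding distrib_fun_def using A(1,4) f by (intro emeasure_Diff) auto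
    then show ?thesis using A(4) by simp
  qed
  then show ?thesis using A by auto
qed

lemma distrib_fun_restrict_le_rearr_head:
  assumes f: "f \<in> lmeas" and fin: "\<And>s. 0 < s \<Longrightarrow> rearr f s \<noteq> \<infinity>"
    and A: "A \<in> sets lebesgue" "emeasure lebesgue A \<le> 1" and \<tau>: "0 \<le> \<tau>"
  shows "distrib_fun (\<lambda>x. if x \<in> A then f x else 0) \<tau> \<le> distrib_fun (rearr_head f) \<tau>"
proof -
  have "distrib_fun (\<lambda>x. if x \<in> A then f x else 0) \<tau> = emeasure lebesgue ({x. \<tau> < \<bar>f x\<bar>} \<inter> A)"
    unfolding distrib_fun_def using \<tau> by (intro arg_cong[where f = "emeasure lebesgue"]) auto
  also have "\<dots> \<le> min 1 (distrib_fun f \<tau>)"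
  proof (rule min.boundedI)
    have "emeasure lebesgue ({x. \<tau> < \<bar>f x\<bar>} \<inter> A) \<le> emeasure lebesgue A"
      by (rule emeasure_mono) (use A(1) in auto)
    then show "emeasure lebesgue ({x. \<tau> < \<bar>f x\<bar>} \<inter> A) \<le> 1" using A(2) by order
    show "emeasure lebesgue ({x. \<tau> < \<bar>f x\<bar>} \<inter> A) \<le> distrib_fun f \<tau>"
      unfolding distrib_fun_def by (rule emeasure_mono) (use f in auto)
  qed
  also have "\<dots> = distrib_fun (rearr_head f) \<tau>"
    by (simp add: distrib_fun_rearr_head[OF f fin \<tau>])
  finally show ?thesis .
qed

lemma distrib_fun_restrict_compl_le_rearr_tail:
  assumes f: "f \<in> lmeas" and fin: "\<And>s. 0 < s \<Longrightarrow> rearr f s \<noteq> \<infinity>"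
    and A: "{x. \<theta> < \<bar>f x\<bar>} \<subseteq> A"
      "\<And>t. t < \<theta> \<Longrightarrow> emeasure lebesgue ({x. t < \<bar>f x\<bar>} - A) \<le> distrib_fun f t - 1"
    and \<tau>: "0 \<le> \<tau>"
  shows "distrib_fun (\<lambda>x. if x \<in> A then 0 else f x) \<tau> \<le> distrib_fun (rearr_tail f) \<tau>"
proof -
  have "distrib_fun (\<lambda>x. if x \<in> A then 0 else f x) \<tau> = emeasure lebesgue ({x. \<tau> < \<bar>f x\<bar>} - A)"
    unfolding distrib_fun_def using \<tau> by (intro arg_cong[where f = "emeasure lebesgue"]) auto
  also have "\<dots> \<le> distrib_fun f \<tau> - 1"
  proof (cases "\<tau> < \<theta>")
    case False
    then have "{x. \<tau> < \<bar>f x\<bar>} \<subseteq> {x. \<theta> < \<bar>f x\<bar>}" by auto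
    with A(1) have "{x. \<tau> < \<bar>f x\<bar>} - A = {}" by blast
    then show ?thesis by (simp only: emeasure_empty zero_le)
  qed (rule A(2))
  also have "\<dots> = distrib_fun (rearr_tail f) \<tau>"
    by (simp add: distrib_fun_rearr_tail[OF f fin \<tau>])
  finally show ?thesis .
qed

lemma sum_norm_le_H_norm:
  assumes X: "ri_space NX" and Y: "ri_space NY" and f: "f \<in> lmeas"
  shows "sum_norm NX NY f \<le> H_norm NX NY f"
proof (cases "\<exists>s>0. rearr f s = \<infinity>")
  case True
  then show ?thesis by (simp add: H_norm_def)
next
  case False
  then have fin: "\<And>s. 0 < s \<Longrightarrow> rearr f s \<noteq> \<infinity>" by blast
  define \<theta> where "\<theta> = real_of_ereal (rearr f 1)"
  have "distrib_fun f \<theta> \<le> 1"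
    using real_rearr_gt_iff[OF f fin, of 1 \<theta>] by (simp add: \<theta>_def not_less)
  moreover have "1 < distrib_fun f t" if "t < \<theta>" for t
    using real_rearr_gt_iff[OF f fin, of 1 t] that by (simp add: \<theta>_def)
  ultimately have "\<exists>A \<in> sets lebesgue. {x. \<theta> < \<bar>f x\<bar>} \<subseteq> A \<and> emeasure lebesgue A \<le> 1 \<and>
      (\<forall>t < \<theta>. emeasure lebesgue ({x. t < \<bar>f x\<bar>} - A) \<le> distrib_fun f t - 1)"
    by (rule exists_level_set_split[OF f])
  then obtain A where A: "A \<in> sets lebesgue" "{x. \<theta> < \<bar>f x\<bar>} \<subseteq> A" "emeasure lebesgue A \<le> 1"
    "\<And>t. t < \<theta> \<Longrightarrow> emeasure lebesgue ({x. t < \<bar>f x\<bar>} - A) \<le> distrib_fun f t - 1"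
    by blast
  define f1 where "f1 = (\<lambda>x. if x \<in> A then f x else 0)"
  define f2 where "f2 = (\<lambda>x. if x \<in> A then 0 else f x)"
  have f12: "f1 \<in> lmeas" "f2 \<in> lmeas"
    unfolding f1_def f2_def using A(1) f by (auto intro!: measurable_If_set)
  have "sum_norm NX NY f \<le> NX f1 + NY f2"
    unfolding sum_norm_def by (rule INF_lower2[of "(f1, f2)"]) (auto simp: f1_def f2_def)
  also have "NX f1 \<le> NX (rearr_head f)"
    unfolding f1_def using distrib_fun_restrict_le_rearr_head[OF f fin A(1,3)]
    by (intro ri_space_mono_distrib[OF X rearr_head_measurable f12(1)[unfolded f1_def]])
  also have "NY f2 \<le> NY (rearr_tail f)"
    unfolding f2_def using distrib_fun_restrict_compl_le_rearr_tail[OF f fin A(2,4)]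
    by (intro ri_space_mono_distrib[OF Y rearr_tail_measurable f12(2)[unfolded f2_def]])
  finally show ?thesis by (simp add: H_norm_eq[OF fin] add_mono)
qed

section \<open>The \<open>H\<close>-norm is bounded by the \<open>X + Y\<close> norm\<close>

lemma ennreal_quasi_triangle_bound:
  fixes F x y a b :: ennreal
  assumes F: "F \<le> ennreal K * (x + y)" and K: "K < k"
    and x: "x \<le> ennreal c * a" and y: "y \<le> ennreal c * b" and c: "0 \<le> c"
  shows "F \<le> ennreal (c * k) * (a + b)"
proof -
  note F
  also have "ennreal K * (x + y) \<le> ennreal k * (ennreal c * a + ennreal c * b)"
    using K x y by (intro mult_mono add_mono ennreal_leI) auto
  also have "\<dots> = ennreal (c * k) * (a + b)"
    using c by (simp add: distrib_left ennreal_mult' mult_ac)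
  finally show ?thesis .
qed

lemma le_mult_INF_ennreal:
  fixes C H :: ennreal
  assumes C: "0 < C" "C < top" and le: "\<And>p. p \<in> P \<Longrightarrow> H \<le> C * F p"
  shows "H \<le> C * (INF p\<in>P. F p)"
proof -
  have "H / C \<le> (INF p\<in>P. F p)"
    by (rule INF_greatest) (use le C in \<open>auto intro: divide_le_posI_ennreal\<close>)
  then have "H / C * C \<le> (INF p\<in>P. F p) * C" by (rule mult_right_mono) simp
  moreover have "H / C * C = H" using C by (simp add: ennreal_divide_times)
  ultimately show ?thesis by (simp add: mult.commute)
qed

locale comparable_ri_spaces =
  fixes NX NY :: "(real \<Rightarrow> real) \<Rightarrow> ennreal" and c1 c2 c3 :: real
  assumes X: "ri_space NX" and Y: "ri_space NY"
    and X_le_Y: "\<And>f. f \<in> lmeas \<Longrightarrow> (\<forall>x. x \<notin> {0..1} \<longrightarrow> f x = 0) \<Longrightarrow> NX f \<le> ennreal c1 * NY f"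
    and Y_le_X: "\<And>f. f \<in> lmeas \<Longrightarrow>
      (\<forall>n::int. \<forall>x\<in>{real_of_int n..<real_of_int n + 1}. f x = f (real_of_int n)) \<Longrightarrow>
      NY f \<le> ennreal c1 * NX f"
    and dilate_X: "\<And>f. f \<in> lmeas \<Longrightarrow> NX (dilate (1/4) f) \<le> ennreal c2 * NX f"
    and dilate_Y: "\<And>f. f \<in> lmeas \<Longrightarrow> NY (dilate (1/4) f) \<le> ennreal c2 * NY f"
    and quasi_triangle_X: "\<exists>K<c3. quasi_triangle_const NX K"
    and quasi_triangle_Y: "\<exists>K<c3. quasi_triangle_const NY K"
begin

text \<open>Both (i) and (ii) apply to the indicator of \<open>[0, 1)\<close>, whence \<open>c\<^sub>1\<^sup>2 \<ge> 1\<close>.\<close>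
lemma c1_ge_1: "1 \<le> c1"
proof -
  define u where "u = (indicator {0..<1} :: real \<Rightarrow> real)"
  have u: "u \<in> lmeas" unfolding u_def by (rule indicator_interval_measurable)
  have "NX u \<le> ennreal c1 * NY u"
    by (rule X_le_Y[OF u]) (auto simp: u_def)
  moreover have "NY u \<le> ennreal c1 * NX u"
  proof (rule Y_le_X[OF u], intro allI ballI)
    fix n :: int and x assume "x \<in> {real_of_int n..<real_of_int n + 1}"
    then have "\<lfloor>x\<rfloor> = n" by (simp add: floor_eq_iff)
    then show "u x = u (real_of_int n)" by (auto simp: u_def indicator_def floor_eq_iff)
  qed
  ultimately have le: "NX u \<le> ennreal c1 * (ennreal c1 * NX u)"
    by (meson mult_left_mono order_trans zero_le)
  have "0 < NX u" "NX u < \<infinity>"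
    unfolding u_def using ri_space_indicator_pos[OF X] ri_space_indicator_finite[OF X] by auto
  then obtain a where a: "NX u = ennreal a" "0 < a"
    by (cases "NX u") (auto simp: ennreal_less_zero_iff)
  have "0 \<le> c1"
  proof (rule ccontr)
    assume "\<not> 0 \<le> c1"
    then have "ennreal c1 = 0" by (simp add: ennreal_eq_0_iff)
    with le a show False by simp
  qed
  with le a have "1 * a \<le> (c1 * c1) * a" by (simp add: mult.assoc flip: ennreal_mult)
  with a(2) have "1 \<le> c1 * c1" by (simp add: mult_le_cancel_right)
  with \<open>0 \<le> c1\<close> show ?thesis using power2_le_imp_le[of 1 c1] by (simp add: power2_eq_square)
qed

lemma c2_pos: "0 < c2"
proof (rule ccontr)
  assume "\<not> 0 < c2"
  then have "ennreal c2 = 0" by (simp add: ennreal_eq_0_iff)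
  then have "NX (dilate (1/4) (indicator {0..<1})) = 0"
    using dilate_X[OF indicator_interval_measurable[of 0 1]] by simp
  moreover have "dilate (1/4) (indicator {0..<1}) = (indicator {0..<4} :: real \<Rightarrow> real)"
    by (auto simp: dilate_def indicator_def)
  ultimately show False using ri_space_indicator_pos[OF X, of 0 4] by simp
qed

lemma c3_pos: "0 < c3"
proof -
  obtain K where "K < c3" "quasi_triangle_const NX K" using quasi_triangle_X by blast
  with quasi_triangle_const_ge_1[OF X] show ?thesis by force
qed

lemma c1_c2_pos: "0 < c1 * c2"
  using c1_ge_1 c2_pos by simp

lemma constant_pos: "0 < 2 * c1 * c2 * c3"
  using c1_c2_pos c3_pos by simp

lemma c2_le_c1_c2: "ennreal c2 \<le> ennreal (c1 * c2)"
  using mult_right_mono[OF c1_ge_1, of c2] c2_pos by (intro ennreal_leI) simp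

lemma dilate_X_le: "f \<in> lmeas \<Longrightarrow> NX (dilate (1/4) f) \<le> ennreal (c1 * c2) * NX f"
  using dilate_X mult_right_mono[OF c2_le_c1_c2] by (meson order.trans zero_le)

lemma dilate_Y_le: "f \<in> lmeas \<Longrightarrow> NY (dilate (1/4) f) \<le> ennreal (c1 * c2) * NY f"
  using dilate_Y mult_right_mono[OF c2_le_c1_c2] by (meson order.trans zero_le)

lemma norm_X_rearr_half_le:
  assumes g: "g \<in> lmeas" and fin: "\<And>s. 0 < s \<Longrightarrow> rearr g s \<noteq> \<infinity>"
    and I: "I \<in> sets borel" "I \<subseteq> {0<..}"
  shows "NX (rearr_half I g) \<le> ennreal (c1 * c2) * NX g"
  by (rule order.trans[OF ri_space_rearr_half_le_dilate[OF X g _ I] dilate_X_le[OF g]]) (fact fin)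

lemma norm_Y_rearr_half_le:
  assumes h: "h \<in> lmeas" and fin: "\<And>s. 0 < s \<Longrightarrow> rearr h s \<noteq> \<infinity>"
    and I: "I \<in> sets borel" "I \<subseteq> {0<..}"
  shows "NY (rearr_half I h) \<le> ennreal (c1 * c2) * NY h"
  by (rule order.trans[OF ri_space_rearr_half_le_dilate[OF Y h _ I] dilate_Y_le[OF h]]) (fact fin)

lemma norm_X_rearr_half_unit_le:
  assumes h: "h \<in> lmeas" and fin: "\<And>s. 0 < s \<Longrightarrow> rearr h s \<noteq> \<infinity>"
  shows "NX (rearr_half {0<..1} h) \<le> ennreal (c1 * c2) * NY h"
proof -
  have "NX (rearr_half {0<..1} h) \<le> ennreal c1 * NY (rearr_half {0<..1} h)"
    by (rule X_le_Y[OF rearr_half_measurable]) (auto simp: rearr_half_def)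
  also have "NY (rearr_half {0<..1} h) \<le> NY (dilate (1/4) h)"
    by (rule ri_space_rearr_half_le_dilate[OF Y h fin]) auto
  also have "\<dots> \<le> ennreal c2 * NY h" by (rule dilate_Y[OF h])
  also have "ennreal c1 * (ennreal c2 * NY h) = ennreal (c1 * c2) * NY h"
    using c1_ge_1 by (simp add: ennreal_mult' mult.assoc)
  finally show ?thesis by (simp add: mult_left_mono)
qed

lemma norm_Y_rearr_half_tail_le:
  assumes g: "g \<in> lmeas" and fin: "\<And>s. 0 < s \<Longrightarrow> rearr g s \<noteq> \<infinity>"
  shows "NY (rearr_half {1..} g) \<le> ennreal (c1 * c2) * NX g"
proof -
  define S where "S = (\<lambda>t::real. if t \<in> {1..} then real_of_ereal (rearr g (real_of_int \<lfloor>t\<rfloor> / 2)) else 0)"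
  have S: "S \<in> lmeas" unfolding S_def by (rule measurable_completion) measurable
  have "NY (rearr_half {1..} g) \<le> NY S"
  proof (rule ri_space_mono_abs[OF Y S rearr_half_measurable])
    fix t
    show "\<bar>rearr_half {1..} g t\<bar> \<le> \<bar>S t\<bar>"
      using real_rearr_antimono[OF g fin, of "real_of_int \<lfloor>t\<rfloor> / 2" "t / 2"] real_rearr_nonneg[OF g]
      by (auto simp: rearr_half_def S_def)
  qed simp
  also have "\<dots> \<le> ennreal c1 * NX S"
  proof (rule Y_le_X[OF S], intro allI ballI)
    fix n :: int and x assume "x \<in> {real_of_int n..<real_of_int n + 1}"
    then have "\<lfloor>x\<rfloor> = n" "1 \<le> x \<longleftrightarrow> 1 \<le> real_of_int n" by (auto simp: floor_eq_iff)
    then show "S x = S (real_of_int n)" by (simp add: S_def)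
  qed
  also have "NX S \<le> NX (dilate (1/4) g)"
    unfolding S_def
  proof (rule ri_space_rearr_comp_le_dilate[OF X g fin, where b = 1])
    fix t c :: real assume "t \<in> {1..}" "real_of_int \<lfloor>t\<rfloor> / 2 < c"
    then show "1 \<le> t \<and> t \<le> 1 + 2 * c"
      using real_of_int_floor_add_one_gt[of t] by (simp, linarith)
  qed auto
  also have "\<dots> \<le> ennreal c2 * NX g" by (rule dilate_X[OF g])
  also have "ennreal c1 * (ennreal c2 * NX g) = ennreal (c1 * c2) * NX g"
    using c1_ge_1 by (simp add: ennreal_mult' mult.assoc)
  finally show ?thesis by (simp add: mult_left_mono)
qed

lemma H_norm_add_le:
  assumes g: "NX g < \<infinity>" and h: "NY h < \<infinity>"
  shows "H_norm NX NY (\<lambda>x. g x + h x) \<le> ennreal (2 * c1 * c2 * c3) * (NX g + NY h)"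
proof -
  have gm: "g \<in> lmeas" and hm: "h \<in> lmeas"
    using ri_space_measurable[OF X g] ri_space_measurable[OF Y h] .
  have gfin: "\<And>s. 0 < s \<Longrightarrow> rearr g s \<noteq> \<infinity>" and hfin: "\<And>s. 0 < s \<Longrightarrow> rearr h s \<noteq> \<infinity>"
    using ri_space_rearr_finite[OF X gm g] ri_space_rearr_finite[OF Y hm h] by auto
  have fin: "\<And>s. 0 < s \<Longrightarrow> rearr (\<lambda>x. g x + h x) s \<noteq> \<infinity>"
    using rearr_add_finite[OF gm hm] gfin hfin by simp
  obtain KX KY where KX: "KX < c3" "quasi_triangle_const NX KX"
    and KY: "KY < c3" "quasi_triangle_const NY KY"
    using quasi_triangle_X quasi_triangle_Y by blast
  have "NX (rearr_head (\<lambda>x. g x + h x))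
      \<le> ennreal KX * (NX (rearr_half {0<..1} g) + NX (rearr_half {0<..1} h))"
    by (rule ri_space_quasi_triangle_dominated[OF X KX(2) rearr_head_measurable
          rearr_half_measurable rearr_half_measurable abs_rearr_head_add_le[OF gm hm gfin hfin]]) auto
  moreover have "NX (rearr_half {0<..1} g) \<le> ennreal (c1 * c2) * NX g"
    by (rule norm_X_rearr_half_le[OF gm gfin]) auto
  ultimately have head: "NX (rearr_head (\<lambda>x. g x + h x)) \<le> ennreal (c1 * c2 * c3) * (NX g + NY h)"
    using norm_X_rearr_half_unit_le[OF hm hfin] c1_c2_pos
    by (intro ennreal_quasi_triangle_bound[OF _ KX(1)]) auto
  have "NY (rearr_tail (\<lambda>x. g x + h x))
      \<le> ennreal KY * (NY (rearr_half {1..} g) + NY (rearr_half {1..} h))"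
    by (rule ri_space_quasi_triangle_dominated[OF Y KY(2) rearr_tail_measurable
          rearr_half_measurable rearr_half_measurable abs_rearr_tail_add_le[OF gm hm gfin hfin]]) auto
  moreover have "NY (rearr_half {1..} h) \<le> ennreal (c1 * c2) * NY h"
    by (rule norm_Y_rearr_half_le[OF hm hfin]) auto
  ultimately have tail: "NY (rearr_tail (\<lambda>x. g x + h x)) \<le> ennreal (c1 * c2 * c3) * (NX g + NY h)"
    using norm_Y_rearr_half_tail_le[OF gm gfin] c1_c2_pos
    by (intro ennreal_quasi_triangle_bound[OF _ KY(1)]) auto
  have "H_norm NX NY (\<lambda>x. g x + h x) \<le> 2 * (ennreal (c1 * c2 * c3) * (NX g + NY h))"
    using H_norm_eq[of "\<lambda>x. g x + h x" NX NY] fin add_mono[OF head tail] by (simp add: mult_2)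
  also have "\<dots> = ennreal (2 * c1 * c2 * c3) * (NX g + NY h)"
    by (simp add: ennreal_mult' mult.assoc)
  finally show ?thesis .
qed

lemma H_norm_le_sum_norm: "H_norm NX NY f \<le> ennreal (2 * c1 * c2 * c3) * sum_norm NX NY f"
  unfolding sum_norm_def
proof (rule le_mult_INF_ennreal)
  show "0 < ennreal (2 * c1 * c2 * c3)" using constant_pos by simp
  fix p assume "p \<in> {(f', f''). \<forall>x. f' x + f'' x = f x}"
  then have f: "f = (\<lambda>x. fst p x + snd p x)" by auto
  show "H_norm NX NY f \<le> ennreal (2 * c1 * c2 * c3) * (NX (fst p) + NY (snd p))"
  proof (cases "NX (fst p) < \<infinity> \<and> NY (snd p) < \<infinity>")
    case True
    then show ?thesis unfolding f by (intro H_norm_add_le) auto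
  next
    case False
    then have "NX (fst p) + NY (snd p) = \<infinity>" by (simp add: less_top[symmetric])
    moreover have "ennreal (2 * c1 * c2 * c3) \<noteq> 0"
      using constant_pos by (simp only: ennreal_eq_0_iff not_le)
    ultimately have "ennreal (2 * c1 * c2 * c3) * (NX (fst p) + NY (snd p)) = \<infinity>"
      by (metis ennreal_mult_top infinity_ennreal_def)
    then show ?thesis by simp
  qed
qed simp

end

theorem theorem7:
  fixes NX NY :: "(real \<Rightarrow> real) \<Rightarrow> ennreal" and c1 c2 c3 :: real
  assumes X: "ri_space NX" and Y: "ri_space NY"
    and i: "\<And>f. f \<in> lmeas \<Longrightarrow> (\<forall>x. x \<notin> {0..1} \<longrightarrow> f x = 0) \<Longrightarrow> NX f \<le> ennreal c1 * NY f"
    and ii: "\<And>f. f \<in> lmeas \<Longrightarrow>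
               (\<forall>n::int. \<forall>x\<in>{real_of_int n..<real_of_int n + 1}. f x = f (real_of_int n)) \<Longrightarrow>
               NY f \<le> ennreal c1 * NX f"
    and iiiX: "\<And>f. f \<in> lmeas \<Longrightarrow> NX (dilate (1/4) f) \<le> ennreal c2 * NX f"
    and iiiY: "\<And>f. f \<in> lmeas \<Longrightarrow> NY (dilate (1/4) f) \<le> ennreal c2 * NY f"
    and ivX: "\<exists>K<c3. quasi_triangle_const NX K"
    and ivY: "\<exists>K<c3. quasi_triangle_const NY K"
    and f: "f \<in> lmeas"
  shows "sum_norm NX NY f \<le> H_norm NX NY f \<and>
         H_norm NX NY f \<le> ennreal (2 * c1 * c2 * c3) * sum_norm NX NY f"
proof
  interpret comparable_ri_spaces NX NY c1 c2 c3
    using assms by unfold_locales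
  show "sum_norm NX NY f \<le> H_norm NX NY f" by (rule sum_norm_le_H_norm[OF X Y f])
  show "H_norm NX NY f \<le> ennreal (2 * c1 * c2 * c3) * sum_norm NX NY f" by (rule H_norm_le_sum_norm)
qed

end
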